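(* Let $C\subset\mathbb{Z}_2^{l+r}$ be an even code (a subgroup with $|\alpha|\in2\mathbb{Z}$ for all $\alpha\in C$), and let $\varepsilon:C\times C\to\{\pm1\}$ be bimultiplicative with $\varepsilon(\alpha,\alpha)=(-1)^{|\alpha|/2}$ and $\varepsilon(\alpha,\beta)\varepsilon(\beta,\alpha)=(-1)^{|\alpha\beta|}$. Then the twisted group algebra $\mathbb{C}[\hat C]$ (basis $e_\alpha$, $e_\alpha e_\beta=\varepsilon(\alpha,\beta)e_{\alpha+\beta}$, $e_\alpha$ in degree $(0,\alpha)$, unit $e_0$) is a simple $(l,r)$-framed algebra whose structure codes are $D=\{0\}$ and $C$.
   Context: Let $\mathrm{IS}=\{0,\frac12,\frac1{16}\}$ with fusion rule $\star$ (values are subsets): $0\star h=h\star0=\{h\}$, $\frac12\star\frac12=\{0\}$, $\frac12\star\frac1{16}=\frac1{16}\star\frac12=\{\frac1{16}\}$, $\frac1{16}\star\frac1{16}=\{0,\frac12\}$; $A(h_0,h_1,h_2,h_3)=\{h: h\in h_2\star h_3,\ h_0\in h_1\star h\}$. For $h\in A(h_0,h_1,h_2,h_3)$, $h'\in A(h_0,h_2,h_1,h_3)$ define $B^{h,h'}_{h_0,h_1,h_2,h_3}$: $B_{*,0,*,*}=B_{*,*,0,*}=1$; $B_{*,\frac12,\frac12,*}=-1$; $B_{a,\frac12,\frac1{16},a'}=B_{a,\frac1{16},\frac12,a'}=i$ if $a$ or $a'$ is $\frac12$, else $-i$; $B^{b,b'}_{a,\frac1{16},\frac1{16},a'}=e^{-\pi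 i/8}\cdot\{1$ if $a,a'\ne\frac1{16},a=a'$; $i$ if $a,a'\neq\frac1{16},a\ne a'$; $\frac{1+i}2$ if $a=a'=\frac1{16},b=b'$; $\frac{1-i}2$ if $a=a'=\frac1{16},b\neq b'\}$. $\mathrm{IS}^{(l,r)}=\mathrm{IS}^l\times\mathrm{IS}^r$, $\lambda=(h_1,..,h_l,\bar h_1,..,\bar h_r)$, $s(\lambda)=\sum h_i-\sum\bar h_j$; $\star$, $A$ componentwise; $B^{\lambda,\lambda'}_{\lambda^0,\dots,\lambda^3}=\prod_{i\le l}B^{h_i,h'_i}_{h^0_i,\dots,h^3_i}\prod_{j\le r}\overline{B^{\bar h_j,\bar h'_j}_{\bar h^0_j,\dots,\bar h^3_j}}$. An $(l,r)$-framed algebra: finite-dimensional $\mathrm{IS}^{(l,r)}$-graded $S=\bigoplus S_\lambda$ over $\mathbb{C}$ with bilinear product, nonzero $1\in S_0$, $a\cdot_\lambda b$ the $S_\lambda$-component of $a\cdot b$, satisfying (FA1) $S_\lambda=0$ unless $s(\lambda)\in\mathbb{Z}$; (FA2) $S_0=\mathbb{C}1$, $1$ a two-sided unit; (FA3) $S_{\lambda^1}\cdot S_{\lambda^2}\subset\bigoplus_{\lambda\in\lambda^1\star\lambda^2}S_\lambda$; (FA4) $a_2\cdot_{\lambda^0}(a_1\cdot_{\lambda'}a_3)=\sum_{\lambda\in A(\lambda^0,\lambda^1,\lambda^2,\lambda^3)}B^{\lambda,\lambda'}_{\lambda^0,\lambda^1,\lambda^2,\lambda^3}a_1\cdot_{\lambda^0}(a_2\cdot_\lambda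 a_3)$ for $a_i\in S_{\lambda^i}$, $\lambda'\in A(\lambda^0,\lambda^2,\lambda^1,\lambda^3)$. Ideal: graded subspace $M$ with $S\cdot M\subset M$; simple: only ideals $0$ and $S$. Identify $\mathrm{IS}$ with $\{(d,c)\in\mathbb{Z}_2^2:dc=0\}$ via $0\leftrightarrow(0,0)$, $\frac12\leftrightarrow(0,1)$, $\frac1{16}\leftrightarrow(1,0)$, and componentwise $\mathrm{IS}^{(l,r)}$ with pairs $(d,c)\in(\mathbb{Z}_2^{l+r})^2$, $dc=0$. For $c\in\mathbb{Z}_2^{l+r}$, $|c|=|c|_l-|c|_r$ with $|c|_l,|c|_r$ the numbers of ones in the first $l$ and last $r$ coordinates; products of codewords are componentwise. Structure codes of $S$: $C_S=\{\alpha:S_{(0,\alpha)}\ne0\}$, $D_S=\{d:\bigoplus_cS_{(d,c)}\ne0\}$. *)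

theory Defs
  imports Complex_Main "HOL-Library.Function_Algebras"
begin

datatype IS = Z | H | S

fun hval :: "IS \<Rightarrow> real" where
  "hval Z = 0" | "hval H = 1/2" | "hval S = 1/16"

fun star1 :: "IS \<Rightarrow> IS \<Rightarrow> IS set" where
  "star1 Z h = {h}"
| "star1 h Z = {h}"
| "star1 H H = {Z}"
| "star1 H S = {S}"
| "star1 S H = {S}"
| "star1 S S = {Z, H}"

definition A1 :: "IS \<Rightarrow> IS \<Rightarrow> IS \<Rightarrow> IS \<Rightarrow> IS set" where
  "A1 h0 h1 h2 h3 = {h. h \<in> star1 h2 h3 \<and> h0 \<in> star1 h1 h}"

(* B^{h,h'}_{h0,h1,h2,h3}; value 0 on index combinations that never occur *)
fun B1 :: "IS \<Rightarrow> IS \<Rightarrow> IS \<Rightarrow> IS \<Rightarrow> IS \<Rightarrow> IS \<Rightarrow> complex" where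
  "B1 h h' a Z h2 a' = 1"
| "B1 h h' a h1 Z a' = 1"
| "B1 h h' a H H a' = -1"
| "B1 h h' a H S a' = (if a = H \<or> a' = H then \<i> else - \<i>)"
| "B1 h h' a S H a' = (if a = H \<or> a' = H then \<i> else - \<i>)"
| "B1 h h' a S S a' = exp (- pi * \<i> / 8) *
     (if a \<noteq> S \<and> a' \<noteq> S then (if a = a' then 1 else \<i>)
      else if a = S \<and> a' = S then (if h = h' then (1 + \<i>) / 2 else (1 - \<i>) / 2)
      else 0)"

section \<open>Grades: IS^(l,r), represented as nat \<Rightarrow> IS that are Z outside {..<l+r}\<close>

type_synonym grade = "nat \<Rightarrow> IS"

definition Gr :: "nat \<Rightarrow> nat \<Rightarrow> grade set" where
  "Gr l r = {g. \<forall>i\<ge>l+r. g i = Z}"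

definition grade0 :: grade where "grade0 = (\<lambda>i. Z)"

definition sG :: "nat \<Rightarrow> nat \<Rightarrow> grade \<Rightarrow> real" where
  "sG l r g = (\<Sum>i<l. hval (g i)) - (\<Sum>i\<in>{l..<l+r}. hval (g i))"

definition starG :: "grade \<Rightarrow> grade \<Rightarrow> grade set" where
  "starG g1 g2 = {g. \<forall>i. g i \<in> star1 (g1 i) (g2 i)}"

definition AG :: "grade \<Rightarrow> grade \<Rightarrow> grade \<Rightarrow> grade \<Rightarrow> grade set" where
  "AG g0 g1 g2 g3 = {g. \<forall>i. g i \<in> A1 (g0 i) (g1 i) (g2 i) (g3 i)}"

definition BG :: "nat \<Rightarrow> nat \<Rightarrow> grade \<Rightarrow> grade \<Rightarrow> grade \<Rightarrow> grade \<Rightarrow> grade \<Rightarrow> grade \<Rightarrow> complex" where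
  "BG l r g g' g0 g1 g2 g3 =
     (\<Prod>i<l. B1 (g i) (g' i) (g0 i) (g1 i) (g2 i) (g3 i)) *
     (\<Prod>i\<in>{l..<l+r}. cnj (B1 (g i) (g' i) (g0 i) (g1 i) (g2 i) (g3 i)))"

text \<open>A graded algebra is given by: a complex vector space structure (scalar
multiplication scl on the type 'v), a carrier subspace V, a family of subspaces
Sg indexed by grades (zero outside Gr l r) whose direct sum is V, a product and
a unit.\<close>

definition decomp :: "nat \<Rightarrow> nat \<Rightarrow> (grade \<Rightarrow> 'v::ab_group_add set) \<Rightarrow> 'v \<Rightarrow> grade \<Rightarrow> 'v" where
  "decomp l r Sg x = (THE f. (\<forall>g\<in>Gr l r. f g \<in> Sg g) \<and> (\<forall>g. g \<notin> Gr l r \<longrightarrow> f g = 0)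
                          \<and> x = (\<Sum>g\<in>Gr l r. f g))"

(* a \<cdot>_g b := comp l r Sg g (mult a b) *)
definition comp :: "nat \<Rightarrow> nat \<Rightarrow> (grade \<Rightarrow> 'v::ab_group_add set) \<Rightarrow> grade \<Rightarrow> 'v \<Rightarrow> 'v" where
  "comp l r Sg g x = decomp l r Sg x g"

definition graded_space ::
  "(complex \<Rightarrow> 'v::ab_group_add \<Rightarrow> 'v) \<Rightarrow> nat \<Rightarrow> nat \<Rightarrow> 'v set \<Rightarrow> (grade \<Rightarrow> 'v set) \<Rightarrow> bool" where
  "graded_space scl l r V Sg \<longleftrightarrow>
     Vector_Spaces.vector_space scl \<and>
     module.subspace scl V \<and>
     (\<forall>g. module.subspace scl (Sg g) \<and> Sg g \<subseteq> V) \<and>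
     (\<forall>g. g \<notin> Gr l r \<longrightarrow> Sg g = {0}) \<and>
     (\<forall>x\<in>V. \<exists>!f. (\<forall>g\<in>Gr l r. f g \<in> Sg g) \<and> (\<forall>g. g \<notin> Gr l r \<longrightarrow> f g = 0)
                    \<and> x = (\<Sum>g\<in>Gr l r. f g)) \<and>
     (\<exists>Bs. finite Bs \<and> Bs \<subseteq> V \<and> module.span scl Bs = V)"

definition bilinear_on ::
  "(complex \<Rightarrow> 'v::ab_group_add \<Rightarrow> 'v) \<Rightarrow> 'v set \<Rightarrow> ('v \<Rightarrow> 'v \<Rightarrow> 'v) \<Rightarrow> bool" where
  "bilinear_on scl V mult \<longleftrightarrow>
     (\<forall>a\<in>V. \<forall>b\<in>V. mult a b \<in> V) \<and>
     (\<forall>a\<in>V. \<forall>b\<in>V. \<forall>c\<in>V. mult (a + b) c = mult a c + mult b c \<and> mult a (b + c) = mult a b + mult a c) \<and>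
     (\<forall>a\<in>V. \<forall>b\<in>V. \<forall>k. mult (scl k a) b = scl k (mult a b) \<and> mult a (scl k b) = scl k (mult a b))"

definition framed_algebra ::
  "(complex \<Rightarrow> 'v::ab_group_add \<Rightarrow> 'v) \<Rightarrow> nat \<Rightarrow> nat \<Rightarrow> 'v set \<Rightarrow> (grade \<Rightarrow> 'v set)
     \<Rightarrow> ('v \<Rightarrow> 'v \<Rightarrow> 'v) \<Rightarrow> 'v \<Rightarrow> bool" where
  "framed_algebra scl l r V Sg mult one \<longleftrightarrow>
     graded_space scl l r V Sg \<and> bilinear_on scl V mult \<and>
     \<comment> \<open>FA1\<close>
     (\<forall>g\<in>Gr l r. sG l r g \<notin> \<int> \<longrightarrow> Sg g = {0}) \<and>
     \<comment> \<open>FA2\<close>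
     one \<noteq> 0 \<and> Sg grade0 = module.span scl {one} \<and>
     (\<forall>a\<in>V. mult one a = a \<and> mult a one = a) \<and>
     \<comment> \<open>FA3\<close>
     (\<forall>g1\<in>Gr l r. \<forall>g2\<in>Gr l r. \<forall>a\<in>Sg g1. \<forall>b\<in>Sg g2. \<forall>g\<in>Gr l r.
         g \<notin> starG g1 g2 \<longrightarrow> comp l r Sg g (mult a b) = 0) \<and>
     \<comment> \<open>FA4\<close>
     (\<forall>g0\<in>Gr l r. \<forall>g1\<in>Gr l r. \<forall>g2\<in>Gr l r. \<forall>g3\<in>Gr l r.
       \<forall>a1\<in>Sg g1. \<forall>a2\<in>Sg g2. \<forall>a3\<in>Sg g3. \<forall>g'\<in>AG g0 g2 g1 g3.
         comp l r Sg g0 (mult a2 (comp l r Sg g' (mult a1 a3))) =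
         (\<Sum>g\<in>AG g0 g1 g2 g3. scl (BG l r g g' g0 g1 g2 g3)
              (comp l r Sg g0 (mult a1 (comp l r Sg g (mult a2 a3))))))"

definition is_ideal ::
  "(complex \<Rightarrow> 'v::ab_group_add \<Rightarrow> 'v) \<Rightarrow> nat \<Rightarrow> nat \<Rightarrow> 'v set \<Rightarrow> (grade \<Rightarrow> 'v set)
     \<Rightarrow> ('v \<Rightarrow> 'v \<Rightarrow> 'v) \<Rightarrow> 'v set \<Rightarrow> bool" where
  "is_ideal scl l r V Sg mult M \<longleftrightarrow>
     module.subspace scl M \<and> M \<subseteq> V \<and>
     (\<forall>x\<in>M. \<forall>g. comp l r Sg g x \<in> M) \<and>   \<comment> \<open>graded\<close>
     (\<forall>a\<in>V. \<forall>m\<in>M. mult a m \<in> M)"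

definition simple_framed ::
  "(complex \<Rightarrow> 'v::ab_group_add \<Rightarrow> 'v) \<Rightarrow> nat \<Rightarrow> nat \<Rightarrow> 'v set \<Rightarrow> (grade \<Rightarrow> 'v set)
     \<Rightarrow> ('v \<Rightarrow> 'v \<Rightarrow> 'v) \<Rightarrow> bool" where
  "simple_framed scl l r V Sg mult \<longleftrightarrow>
     (\<forall>M. is_ideal scl l r V Sg mult M \<longrightarrow> M = {0} \<or> M = V)"

type_synonym codeword = "nat \<Rightarrow> bool"

definition Cw :: "nat \<Rightarrow> codeword set" where
  "Cw n = {\<alpha>. \<forall>i\<ge>n. \<not> \<alpha> i}"

definition czero :: codeword where "czero = (\<lambda>i. False)"

definition cadd :: "codeword \<Rightarrow> codeword \<Rightarrow> codeword" where
  "cadd \<alpha> \<beta> = (\<lambda>i. \<alpha> i \<noteq> \<beta> i)"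

definition cmul :: "codeword \<Rightarrow> codeword \<Rightarrow> codeword" where
  "cmul \<alpha> \<beta> = (\<lambda>i. \<alpha> i \<and> \<beta> i)"

definition wt :: "nat \<Rightarrow> nat \<Rightarrow> codeword \<Rightarrow> int" where
  "wt l r \<alpha> = int (card {i. i < l \<and> \<alpha> i}) - int (card {i. l \<le> i \<and> i < l + r \<and> \<alpha> i})"

(* identification of (d,c) with dc = 0 with an element of IS^(l,r) *)
definition toGrade :: "codeword \<Rightarrow> codeword \<Rightarrow> grade" where
  "toGrade d c = (\<lambda>i. if d i then S else if c i then H else Z)"

definition even_code :: "nat \<Rightarrow> nat \<Rightarrow> codeword set \<Rightarrow> bool" where
  "even_code l r C \<longleftrightarrow> C \<subseteq> Cw (l + r) \<and> czero \<in> C \<and>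
     (\<forall>\<alpha>\<in>C. \<forall>\<beta>\<in>C. cadd \<alpha> \<beta> \<in> C) \<and> (\<forall>\<alpha>\<in>C. even (wt l r \<alpha>))"

definition struct_code_C :: "nat \<Rightarrow> nat \<Rightarrow> (grade \<Rightarrow> 'v::zero set) \<Rightarrow> codeword set" where
  "struct_code_C l r Sg = {\<alpha>\<in>Cw (l + r). Sg (toGrade czero \<alpha>) \<noteq> {0}}"

definition struct_code_D :: "nat \<Rightarrow> nat \<Rightarrow> (grade \<Rightarrow> 'v::zero set) \<Rightarrow> codeword set" where
  "struct_code_D l r Sg = {d\<in>Cw (l + r). \<exists>c\<in>Cw (l + r). cmul d c = czero \<and> Sg (toGrade d c) \<noteq> {0}}"

text \<open>Elements are functions codeword \<Rightarrow> complex supported on C (coefficients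
w.r.t. the basis e_\<alpha>); e_\<alpha> e_\<beta> = \<epsilon>(\<alpha>,\<beta>) e_{\<alpha>+\<beta>}.\<close>

definition cscale :: "complex \<Rightarrow> (codeword \<Rightarrow> complex) \<Rightarrow> (codeword \<Rightarrow> complex)" where
  "cscale k f = (\<lambda>x. k * f x)"

definition tw_space :: "codeword set \<Rightarrow> (codeword \<Rightarrow> complex) set" where
  "tw_space C = {f. \<forall>\<alpha>. \<alpha> \<notin> C \<longrightarrow> f \<alpha> = 0}"

definition tw_basis :: "codeword \<Rightarrow> (codeword \<Rightarrow> complex)" where
  "tw_basis \<alpha> = (\<lambda>\<beta>. if \<beta> = \<alpha> then 1 else 0)"

definition tw_mult :: "codeword set \<Rightarrow> (codeword \<Rightarrow> codeword \<Rightarrow> int)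
     \<Rightarrow> (codeword \<Rightarrow> complex) \<Rightarrow> (codeword \<Rightarrow> complex) \<Rightarrow> (codeword \<Rightarrow> complex)" where
  "tw_mult C \<epsilon> f g = (\<lambda>\<gamma>. if \<gamma> \<in> C then
       (\<Sum>\<alpha>\<in>C. of_int (\<epsilon> \<alpha> (cadd \<alpha> \<gamma>)) * f \<alpha> * g (cadd \<alpha> \<gamma>)) else 0)"

(* S_g = span of the e_\<alpha>, \<alpha> \<in> C, of degree (0,\<alpha>) = g *)
definition tw_grading :: "codeword set \<Rightarrow> grade \<Rightarrow> (codeword \<Rightarrow> complex) set" where
  "tw_grading C g = {f \<in> tw_space C. \<forall>\<alpha>. toGrade czero \<alpha> \<noteq> g \<longrightarrow> f \<alpha> = 0}"

end

theory Submission
  imports Defs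
begin

text \<open>Every basis vector \<open>e\<^sub>\<alpha>\<close> has degree \<open>(0,\<alpha>)\<close>, i.e. entries \<open>0\<close> and \<open>1/2\<close> only,
and distinct codewords have distinct degrees. So every homogeneous component is spanned by
a single \<open>e\<^sub>\<alpha>\<close>, and on such degrees the fusion rules are those of \<open>\<int>\<^sub>2\<close>: \<open>A\<close> is a
singleton and \<open>B\<close> is the sign \<open>(-1)\<^bsup>|\<alpha>\<beta>|\<^esup>\<close>. Axiom FA4 for \<open>e\<^sub>\<alpha>\<^sub>1, e\<^sub>\<alpha>\<^sub>2, e\<^sub>\<alpha>\<^sub>3\<close> thus becomes
\<open>\<epsilon>(\<alpha>\<^sub>2,\<alpha>\<^sub>1+\<alpha>\<^sub>3) \<epsilon>(\<alpha>\<^sub>1,\<alpha>\<^sub>3) = \<epsilon>(\<alpha>\<^sub>1,\<alpha>\<^sub>2) \<epsilon>(\<alpha>\<^sub>2,\<alpha>\<^sub>1) \<epsilon>(\<alpha>\<^sub>1,\<alpha>\<^sub>2+\<alpha>\<^sub>3) \<epsilon>(\<alpha>\<^sub>2,\<alpha>\<^sub>3)\<close>, which is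
bimultiplicativity together with \<open>\<epsilon>(\<alpha>,\<beta>)\<^sup>2 = 1\<close>. FA1 holds because the code is even.
Simplicity: a nonzero ideal is graded, so it contains some \<open>e\<^sub>\<beta>\<close>, and
\<open>e\<^sub>\<beta> e\<^sub>\<beta> = \<epsilon>(\<beta>,\<beta>) e\<^sub>0\<close> puts the unit into it.\<close>

lemma sum_fun_apply: "(\<Sum>a\<in>A. f a) x = (\<Sum>a\<in>A. f a x)"
  by (induction A rule: infinite_finite_induct) auto

lemma prod_minus_one_if:
  "finite A \<Longrightarrow> (\<Prod>i\<in>A. if P i then - 1 else 1) = (- 1 :: 'a::comm_ring_1) ^ card {i\<in>A. P i}"
  by (simp add: prod.If_cases Collect_conj_eq Int_commute inf_set_def)

lemma minus_one_power_nat_abs_diff: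
  "(- 1 :: 'a::ring_1) ^ nat \<bar>int a - int b\<bar> = (- 1) ^ (a + b)"
proof -
  have "even (nat \<bar>int a - int b\<bar>) = even (a + b)"
    by (cases "a \<le> b") (auto simp: nat_diff_distrib)
  then show ?thesis by (simp add: minus_one_power_iff)
qed

lemma finite_Cw: "finite (Cw n)"
proof -
  have "Cw n = {f. \<forall>x. (x \<in> {..<n} \<longrightarrow> f x \<in> UNIV) \<and> (x \<notin> {..<n} \<longrightarrow> f x = False)}"
    by (auto simp: Cw_def)
  then show ?thesis using finite_set_of_finite_funs[of "{..<n}" UNIV False] by simp
qed

lemma finite_Gr: "finite (Gr l r)"
proof -
  have "finite (UNIV :: IS set)"
    by (rule finite_subset[of _ "{Z, H, S}"]) (use IS.exhaust in auto)
  moreover have "Gr l r = {f. \<forall>x. (x \<in> {..<l+r} \<longrightarrow> f x \<in> UNIV) \<and> (x \<notin> {..<l+r} \<longrightarrow> f x = Z)}"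
    by (auto simp: Gr_def)
  ultimately show ?thesis using finite_set_of_finite_funs[of "{..<l+r}" UNIV Z] by simp
qed

lemma cadd_left_commute: "cadd \<alpha> (cadd \<beta> \<gamma>) = cadd \<beta> (cadd \<alpha> \<gamma>)"
  by (auto simp: cadd_def)

lemma cadd_cancel_left: "cadd \<alpha> (cadd \<alpha> \<beta>) = \<beta>"
  by (auto simp: cadd_def)

lemma cadd_self: "cadd \<alpha> \<alpha> = czero"
  by (auto simp: cadd_def czero_def)

lemma cadd_czero_left: "cadd czero \<alpha> = \<alpha>"
  and cadd_czero_right: "cadd \<alpha> czero = \<alpha>"
  by (auto simp: cadd_def czero_def)

lemma cadd_eq_iff: "cadd \<alpha> \<gamma> = \<beta> \<longleftrightarrow> \<gamma> = cadd \<alpha> \<beta>"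
  by (auto simp: cadd_def)

subsection \<open>Degrees of codewords\<close>

abbreviation cdeg :: "codeword \<Rightarrow> grade" where
  "cdeg \<equiv> toGrade czero"

definition IS_of_bool :: "bool \<Rightarrow> IS" where
  "IS_of_bool b = (if b then H else Z)"

lemma IS_of_bool_eq_iff [simp]: "IS_of_bool x = IS_of_bool y \<longleftrightarrow> x = y"
  by (auto simp: IS_of_bool_def)

lemma cdeg_apply: "cdeg \<alpha> i = IS_of_bool (\<alpha> i)"
  by (simp add: toGrade_def czero_def IS_of_bool_def)

lemma cdeg_eq_iff [simp]: "cdeg \<alpha> = cdeg \<beta> \<longleftrightarrow> \<alpha> = \<beta>"
  by (auto simp: fun_eq_iff cdeg_apply)

lemma cdeg_czero: "cdeg czero = grade0"
  by (simp add: toGrade_def grade0_def czero_def)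

lemma cdeg_in_Gr: "\<alpha> \<in> Cw (l + r) \<Longrightarrow> cdeg \<alpha> \<in> Gr l r"
  by (auto simp: Cw_def Gr_def toGrade_def czero_def)

lemma sG_cdeg: "sG l r (cdeg \<alpha>) = real_of_int (wt l r \<alpha>) / 2"
proof -
  have "\<And>i. hval (cdeg \<alpha> i) = (if \<alpha> i then 1 / 2 else 0)"
    by (simp add: cdeg_apply IS_of_bool_def)
  moreover have "{i\<in>{..<l}. \<alpha> i} = {i. i < l \<and> \<alpha> i}"
    and "{i\<in>{l..<l+r}. \<alpha> i} = {i. l \<le> i \<and> i < l + r \<and> \<alpha> i}"
    by auto
  ultimately show ?thesis
    by (simp add: sG_def wt_def sum.If_cases Int_def)
qed

lemma star1_IS_of_bool: "star1 (IS_of_bool x) (IS_of_bool y) = {IS_of_bool (x \<noteq> y)}"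
  by (cases x; cases y) (auto simp: IS_of_bool_def)

lemma A1_IS_of_bool:
  "A1 h0 (IS_of_bool x) (IS_of_bool y) (IS_of_bool z) =
     (if h0 = IS_of_bool (x \<noteq> (y \<noteq> z)) then {IS_of_bool (y \<noteq> z)} else {})"
  by (cases x; cases y; cases z; cases h0) (auto simp: A1_def IS_of_bool_def)

lemma B1_IS_of_bool: "B1 h h' a (IS_of_bool x) (IS_of_bool y) a' = (if x \<and> y then - 1 else 1)"
  by (cases x; cases y) (auto simp: IS_of_bool_def)

lemma cdeg_cadd_in_starG: "cdeg (cadd \<alpha> \<beta>) \<in> starG (cdeg \<alpha>) (cdeg \<beta>)"
  by (simp add: starG_def cdeg_apply star1_IS_of_bool cadd_def)

lemma AG_cdeg_iff:
  "g \<in> AG g0 (cdeg \<alpha>) (cdeg \<beta>) (cdeg \<gamma>) \<longleftrightarrow>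
     g0 = cdeg (cadd \<alpha> (cadd \<beta> \<gamma>)) \<and> g = cdeg (cadd \<beta> \<gamma>)"
  by (auto simp: AG_def cdeg_apply A1_IS_of_bool cadd_def fun_eq_iff split: if_splits)

lemma BG_cdeg: "BG l r g g' g0 (cdeg \<alpha>) (cdeg \<beta>) g3 = (- 1) ^ nat \<bar>wt l r (cmul \<alpha> \<beta>)\<bar>"
proof -
  let ?P = "\<lambda>i. \<alpha> i \<and> \<beta> i"
  have "BG l r g g' g0 (cdeg \<alpha>) (cdeg \<beta>) g3 =
      (\<Prod>i<l. if ?P i then - 1 else 1) * (\<Prod>i\<in>{l..<l+r}. if ?P i then - 1 else 1)"
    by (simp add: BG_def cdeg_apply B1_IS_of_bool if_distrib[of cnj] cong: if_cong)
  also have "\<dots> = (- 1) ^ (card {i\<in>{..<l}. ?P i} + card {i\<in>{l..<l+r}. ?P i})"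
    by (simp add: prod_minus_one_if power_add)
  also have "\<dots> = (- 1) ^ nat \<bar>wt l r (cmul \<alpha> \<beta>)\<bar>"
  proof -
    have "{i\<in>{..<l}. ?P i} = {i. i < l \<and> cmul \<alpha> \<beta> i}"
      and "{i\<in>{l..<l+r}. ?P i} = {i. l \<le> i \<and> i < l + r \<and> cmul \<alpha> \<beta> i}"
      by (auto simp: cmul_def)
    then show ?thesis by (simp add: wt_def minus_one_power_nat_abs_diff)
  qed
  finally show ?thesis .
qed

subsection \<open>The twisted group algebra\<close>

definition tw_monom :: "complex \<Rightarrow> codeword \<Rightarrow> codeword \<Rightarrow> complex" where
  "tw_monom c \<alpha> = (\<lambda>\<beta>. if \<beta> = \<alpha> then c else 0)"

definition tw_component :: "(codeword \<Rightarrow> complex) \<Rightarrow> grade \<Rightarrow> codeword \<Rightarrow> complex" where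
  "tw_component x g = (\<lambda>\<beta>. if cdeg \<beta> = g then x \<beta> else 0)"

interpretation cs: Vector_Spaces.vector_space cscale
  by unfold_locales (auto simp: cscale_def algebra_simps)

lemma tw_basis_eq_monom: "tw_basis \<alpha> = tw_monom 1 \<alpha>"
  by (simp add: tw_basis_def tw_monom_def)

lemma cscale_tw_monom: "cscale k (tw_monom c \<alpha>) = tw_monom (k * c) \<alpha>"
  by (auto simp: cscale_def tw_monom_def)

lemma tw_monom_eq_0_iff [simp]: "tw_monom c \<alpha> = 0 \<longleftrightarrow> c = 0"
  by (auto simp: tw_monom_def fun_eq_iff)

lemma cscale_0 [simp]: "cscale k 0 = 0"
  by (simp add: cscale_def fun_eq_iff)

lemma tw_monom_in_tw_space: "\<alpha> \<in> C \<Longrightarrow> tw_monom c \<alpha> \<in> tw_space C"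
  by (auto simp: tw_monom_def tw_space_def)

lemma tw_monom_in_tw_grading: "\<alpha> \<in> C \<Longrightarrow> tw_monom c \<alpha> \<in> tw_grading C (cdeg \<alpha>)"
  by (auto simp: tw_grading_def tw_monom_def tw_space_def)

lemma tw_basis_image_subset: "tw_basis ` C \<subseteq> tw_space C"
  by (auto simp: tw_basis_eq_monom tw_monom_in_tw_space)

lemma tw_grading_subset: "tw_grading C g \<subseteq> tw_space C"
  by (auto simp: tw_grading_def)

lemma subspace_tw_space: "module.subspace cscale (tw_space C)"
  by (rule cs.subspaceI) (auto simp: tw_space_def cscale_def)

lemma subspace_tw_grading: "module.subspace cscale (tw_grading C g)"
  by (rule cs.subspaceI) (auto simp: tw_grading_def tw_space_def cscale_def)

lemma tw_grading_cases:
  assumes f: "f \<in> tw_grading C g"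
  obtains "f = 0" | \<alpha> c where "\<alpha> \<in> C" "g = cdeg \<alpha>" "f = tw_monom c \<alpha>"
proof (cases "f = 0")
  case False
  then obtain \<beta> where "f \<beta> \<noteq> 0"
    by (auto simp: fun_eq_iff)
  with f have \<beta>: "\<beta> \<in> C" "g = cdeg \<beta>"
    by (auto simp: tw_grading_def tw_space_def)
  have "f = tw_monom (f \<beta>) \<beta>"
  proof
    fix \<gamma>
    show "f \<gamma> = tw_monom (f \<beta>) \<beta> \<gamma>"
      using f \<beta>(2) by (auto simp: tw_grading_def tw_monom_def)
  qed
  with \<beta> show ?thesis
    using that(2) by blast
qed (use that(1) in blast)

lemma tw_mult_in_tw_space: "tw_mult C \<epsilon> a b \<in> tw_space C"
  by (simp add: tw_mult_def tw_space_def)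

lemma tw_mult_0 [simp]: "tw_mult C \<epsilon> 0 b = 0" "tw_mult C \<epsilon> a 0 = 0"
  by (simp_all add: tw_mult_def fun_eq_iff)

lemma bilinear_on_tw_mult: "bilinear_on cscale (tw_space C) (tw_mult C \<epsilon>)"
  unfolding bilinear_on_def
proof (intro conjI ballI)
  show "tw_mult C \<epsilon> a b \<in> tw_space C" for a b
    by (rule tw_mult_in_tw_space)
qed (simp_all add: tw_mult_def cscale_def fun_eq_iff sum.distrib sum_distrib_left algebra_simps)

locale graded_code =
  fixes l r :: nat and C :: "codeword set"
  assumes even_code: "even_code l r C"
begin

lemma code_subset_Cw: "C \<subseteq> Cw (l + r)"
  using even_code by (simp add: even_code_def)

lemma finite_code: "finite C"
  using code_subset_Cw finite_Cw finite_subset by blast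

lemma czero_in_code: "czero \<in> C"
  using even_code by (simp add: even_code_def)

lemma cadd_in_code: "\<alpha> \<in> C \<Longrightarrow> \<beta> \<in> C \<Longrightarrow> cadd \<alpha> \<beta> \<in> C"
  using even_code by (simp add: even_code_def)

lemma cdeg_in_Gr_code: "\<alpha> \<in> C \<Longrightarrow> cdeg \<alpha> \<in> Gr l r"
  using code_subset_Cw cdeg_in_Gr by blast

lemma tw_decomposition_iff:
  assumes x: "x \<in> tw_space C"
  shows "(\<forall>g\<in>Gr l r. f g \<in> tw_grading C g) \<and> (\<forall>g. g \<notin> Gr l r \<longrightarrow> f g = 0)
           \<and> x = (\<Sum>g\<in>Gr l r. f g)
         \<longleftrightarrow> f = tw_component x"
proof
  assume f: "(\<forall>g\<in>Gr l r. f g \<in> tw_grading C g) \<and> (\<forall>g. g \<notin> Gr l r \<longrightarrow> f g = 0)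
           \<and> x = (\<Sum>g\<in>Gr l r. f g)"
  have f_apply: "f g \<beta> = (if cdeg \<beta> = g then f g \<beta> else 0)" for g \<beta>
    using f by (cases "g \<in> Gr l r") (auto simp: tw_grading_def)
  have x_apply: "x \<beta> = f (cdeg \<beta>) \<beta>" for \<beta>
  proof -
    have "x \<beta> = (\<Sum>g\<in>Gr l r. f g \<beta>)"
      using f by (simp add: sum_fun_apply)
    also have "\<dots> = (\<Sum>g\<in>Gr l r. if cdeg \<beta> = g then f g \<beta> else 0)"
      by (rule sum.cong[OF refl], rule f_apply)
    also have "\<dots> = f (cdeg \<beta>) \<beta>"
      using f by (auto simp: sum.delta finite_Gr)
    finally show ?thesis .
  qed
  show "f = tw_component x"
  proof (intro ext)
    fix g \<beta>
    show "f g \<beta> = tw_component x g \<beta>"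
      using x_apply f_apply[of g \<beta>] by (cases "cdeg \<beta> = g") (simp_all add: tw_component_def)
  qed
next
  assume f: "f = tw_component x"
  have "tw_component x g \<in> tw_grading C g" for g
    using x by (auto simp: tw_component_def tw_grading_def tw_space_def)
  moreover have "tw_component x g = 0" if "g \<notin> Gr l r" for g
  proof (intro ext)
    fix \<beta>
    show "tw_component x g \<beta> = 0 \<beta>"
      using x cdeg_in_Gr_code that by (auto simp: tw_component_def tw_space_def)
  qed
  moreover have "x = (\<Sum>g\<in>Gr l r. tw_component x g)"
  proof (intro ext)
    fix \<beta>
    show "x \<beta> = (\<Sum>g\<in>Gr l r. tw_component x g) \<beta>"
      using x cdeg_in_Gr_code
      by (auto simp: sum_fun_apply tw_component_def sum.delta finite_Gr tw_space_def)
  qed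
  ultimately show "(\<forall>g\<in>Gr l r. f g \<in> tw_grading C g) \<and> (\<forall>g. g \<notin> Gr l r \<longrightarrow> f g = 0)
           \<and> x = (\<Sum>g\<in>Gr l r. f g)"
    using f by blast
qed

lemma comp_tw_space: "x \<in> tw_space C \<Longrightarrow> comp l r (tw_grading C) g x = tw_component x g"
  unfolding comp_def decomp_def tw_decomposition_iff by simp

lemma comp_tw_monom:
  assumes "\<alpha> \<in> C"
  shows "comp l r (tw_grading C) g (tw_monom c \<alpha>) = (if cdeg \<alpha> = g then tw_monom c \<alpha> else 0)"
proof -
  have "comp l r (tw_grading C) g (tw_monom c \<alpha>) = tw_component (tw_monom c \<alpha>) g"
    using assms by (simp add: comp_tw_space tw_monom_in_tw_space)
  also have "\<dots> = (if cdeg \<alpha> = g then tw_monom c \<alpha> else 0)"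
    by (cases "cdeg \<alpha> = g") (auto simp: tw_component_def tw_monom_def intro!: ext)
  finally show ?thesis .
qed

lemma comp_0 [simp]: "comp l r (tw_grading C) g 0 = 0"
  by (simp add: comp_tw_space tw_space_def tw_component_def fun_eq_iff)

lemma tw_grading_nonzero_iff: "tw_grading C g \<noteq> {0} \<longleftrightarrow> (\<exists>\<alpha>\<in>C. g = cdeg \<alpha>)"
proof
  assume "tw_grading C g \<noteq> {0}"
  moreover have "0 \<in> tw_grading C g"
    using subspace_tw_grading cs.subspace_0 by blast
  ultimately obtain f where "f \<in> tw_grading C g" "f \<noteq> 0"
    by blast
  then show "\<exists>\<alpha>\<in>C. g = cdeg \<alpha>"
    by (cases rule: tw_grading_cases) auto
next
  assume "\<exists>\<alpha>\<in>C. g = cdeg \<alpha>"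
  then show "tw_grading C g \<noteq> {0}"
    using tw_monom_in_tw_grading[of _ C 1] by (metis singletonD tw_monom_eq_0_iff one_neq_zero)
qed

lemma span_tw_basis: "module.span cscale (tw_basis ` C) = tw_space C"
proof (rule cs.span_subspace)
  show "tw_basis ` C \<subseteq> tw_space C"
    by (rule tw_basis_image_subset)
  show "tw_space C \<subseteq> module.span cscale (tw_basis ` C)"
  proof
    fix x assume x: "x \<in> tw_space C"
    have "x = (\<Sum>\<alpha>\<in>C. cscale (x \<alpha>) (tw_basis \<alpha>))"
    proof (intro ext)
      fix \<beta>
      have "(\<Sum>\<alpha>\<in>C. cscale (x \<alpha>) (tw_basis \<alpha>)) \<beta> = (\<Sum>\<alpha>\<in>C. if \<beta> = \<alpha> then x \<alpha> else 0)"
        by (simp add: sum_fun_apply cscale_def tw_basis_def if_distrib cong: if_cong)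
      also have "\<dots> = x \<beta>"
        using x finite_code by (simp add: sum.delta tw_space_def)
      finally show "x \<beta> = (\<Sum>\<alpha>\<in>C. cscale (x \<alpha>) (tw_basis \<alpha>)) \<beta>" ..
    qed
    also have "\<dots> \<in> module.span cscale (tw_basis ` C)"
      by (intro cs.span_sum cs.span_scale cs.span_base) auto
    finally show "x \<in> module.span cscale (tw_basis ` C)" .
  qed
qed (rule subspace_tw_space)

lemma graded_space_tw: "graded_space cscale l r (tw_space C) (tw_grading C)"
  unfolding graded_space_def
proof (intro conjI)
  show "Vector_Spaces.vector_space cscale"
    by unfold_locales
  show "module.subspace cscale (tw_space C)"
    by (rule subspace_tw_space)
  show "\<forall>g. module.subspace cscale (tw_grading C g) \<and> tw_grading C g \<subseteq> tw_space C"
    by (simp add: subspace_tw_grading tw_grading_subset)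
  show "\<forall>g. g \<notin> Gr l r \<longrightarrow> tw_grading C g = {0}"
    using tw_grading_nonzero_iff cdeg_in_Gr_code by metis
  show "\<forall>x\<in>tw_space C. \<exists>!f. (\<forall>g\<in>Gr l r. f g \<in> tw_grading C g) \<and> (\<forall>g. g \<notin> Gr l r \<longrightarrow> f g = 0)
          \<and> x = (\<Sum>g\<in>Gr l r. f g)"
  proof
    fix x assume "x \<in> tw_space C"
    then show "\<exists>!f. (\<forall>g\<in>Gr l r. f g \<in> tw_grading C g) \<and> (\<forall>g. g \<notin> Gr l r \<longrightarrow> f g = 0)
          \<and> x = (\<Sum>g\<in>Gr l r. f g)"
      by (simp only: tw_decomposition_iff) simp
  qed
  show "\<exists>Bs. finite Bs \<and> Bs \<subseteq> tw_space C \<and> module.span cscale Bs = tw_space C"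
    using finite_code span_tw_basis tw_basis_image_subset by blast
qed

lemma tw_grading_non_integral:
  assumes "sG l r g \<notin> \<int>"
  shows "tw_grading C g = {0}"
proof (rule ccontr)
  assume "tw_grading C g \<noteq> {0}"
  then obtain \<alpha> where "\<alpha> \<in> C" "g = cdeg \<alpha>"
    using tw_grading_nonzero_iff by blast
  moreover from \<open>\<alpha> \<in> C\<close> obtain k where "wt l r \<alpha> = 2 * k"
    using even_code by (auto simp: even_code_def elim!: evenE)
  ultimately show False
    using assms sG_cdeg[of l r \<alpha>] by simp
qed

lemma tw_grading_grade0: "tw_grading C grade0 = module.span cscale {tw_basis czero}"
proof -
  have "f \<in> tw_grading C grade0 \<longleftrightarrow> (\<exists>k. f = tw_monom k czero)" for f
  proof
    assume "f \<in> tw_grading C grade0"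
    then show "\<exists>k. f = tw_monom k czero"
      by (cases rule: tw_grading_cases) (auto simp: cdeg_czero[symmetric] intro: exI[of _ 0])
  qed (use tw_monom_in_tw_grading[OF czero_in_code] cdeg_czero in auto)
  then show ?thesis
    by (auto simp: cs.span_singleton tw_basis_eq_monom cscale_tw_monom)
qed

lemma struct_code_C_tw: "struct_code_C l r (tw_grading C) = C"
  using code_subset_Cw by (auto simp: struct_code_C_def tw_grading_nonzero_iff)

lemma struct_code_D_tw: "struct_code_D l r (tw_grading C) = {czero}"
proof -
  have "d = czero" if "toGrade d c = cdeg \<beta>" for d c \<beta>
    using that by (auto simp: fun_eq_iff toGrade_def czero_def split: if_splits)
  moreover have "czero \<in> Cw (l + r)" "cmul czero czero = czero"
    by (simp_all add: Cw_def czero_def cmul_def)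
  ultimately show ?thesis
    using czero_in_code by (auto simp: struct_code_D_def tw_grading_nonzero_iff)
qed

lemma tw_mult_monom:
  assumes "\<alpha> \<in> C" "\<beta> \<in> C"
  shows "tw_mult C \<epsilon> (tw_monom a \<alpha>) (tw_monom b \<beta>) = tw_monom (of_int (\<epsilon> \<alpha> \<beta>) * a * b) (cadd \<alpha> \<beta>)"
proof
  fix \<gamma>
  show "tw_mult C \<epsilon> (tw_monom a \<alpha>) (tw_monom b \<beta>) \<gamma> = tw_monom (of_int (\<epsilon> \<alpha> \<beta>) * a * b) (cadd \<alpha> \<beta>) \<gamma>"
  proof (cases "\<gamma> \<in> C")
    case True
    have "tw_mult C \<epsilon> (tw_monom a \<alpha>) (tw_monom b \<beta>) \<gamma> =
        (\<Sum>\<alpha>'\<in>C. if \<alpha>' = \<alpha> then of_int (\<epsilon> \<alpha> (cadd \<alpha> \<gamma>)) * a * tw_monom b \<beta> (cadd \<alpha> \<gamma>) else 0)"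
      using True by (auto simp: tw_mult_def tw_monom_def intro!: sum.cong)
    also have "\<dots> = of_int (\<epsilon> \<alpha> (cadd \<alpha> \<gamma>)) * a * tw_monom b \<beta> (cadd \<alpha> \<gamma>)"
      using finite_code assms by (simp add: sum.delta)
    also have "\<dots> = tw_monom (of_int (\<epsilon> \<alpha> \<beta>) * a * b) (cadd \<alpha> \<beta>) \<gamma>"
      by (cases "\<gamma> = cadd \<alpha> \<beta>") (auto simp: tw_monom_def cadd_eq_iff cadd_cancel_left)
    finally show ?thesis .
  next
    case False
    then have "\<gamma> \<noteq> cadd \<alpha> \<beta>"
      using cadd_in_code assms by auto
    with False show ?thesis
      by (simp add: tw_mult_def tw_monom_def)
  qed
qed

lemma comp_tw_mult_outside_starG:
  assumes "a \<in> tw_grading C g1" "b \<in> tw_grading C g2" "g \<notin> starG g1 g2"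
  shows "comp l r (tw_grading C) g (tw_mult C \<epsilon> a b) = 0"
  using assms(1)
proof (cases rule: tw_grading_cases)
  case (2 \<alpha> c)
  from assms(2) show ?thesis
  proof (cases rule: tw_grading_cases)
    case (2 \<beta> d)
    then have "cdeg (cadd \<alpha> \<beta>) \<noteq> g"
      using assms(3) cdeg_cadd_in_starG \<open>g1 = cdeg \<alpha>\<close> by auto
    with 2 \<open>\<alpha> \<in> C\<close> \<open>a = tw_monom c \<alpha>\<close> show ?thesis
      by (simp add: tw_mult_monom comp_tw_monom cadd_in_code)
  qed simp
qed simp

end

locale twisted_group_algebra = graded_code +
  fixes \<epsilon> :: "codeword \<Rightarrow> codeword \<Rightarrow> int"
  assumes eps_sign: "\<alpha> \<in> C \<Longrightarrow> \<beta> \<in> C \<Longrightarrow> \<epsilon> \<alpha> \<beta> \<in> {1, -1}"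
    and eps_cadd_left: "\<alpha> \<in> C \<Longrightarrow> \<beta> \<in> C \<Longrightarrow> \<gamma> \<in> C \<Longrightarrow> \<epsilon> (cadd \<alpha> \<beta>) \<gamma> = \<epsilon> \<alpha> \<gamma> * \<epsilon> \<beta> \<gamma>"
    and eps_cadd_right: "\<alpha> \<in> C \<Longrightarrow> \<beta> \<in> C \<Longrightarrow> \<gamma> \<in> C \<Longrightarrow> \<epsilon> \<alpha> (cadd \<beta> \<gamma>) = \<epsilon> \<alpha> \<beta> * \<epsilon> \<alpha> \<gamma>"
    and eps_commute: "\<alpha> \<in> C \<Longrightarrow> \<beta> \<in> C \<Longrightarrow> \<epsilon> \<alpha> \<beta> * \<epsilon> \<beta> \<alpha> = (- 1) ^ nat \<bar>wt l r (cmul \<alpha> \<beta>)\<bar>"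
begin

lemma eps_square: "\<alpha> \<in> C \<Longrightarrow> \<beta> \<in> C \<Longrightarrow> \<epsilon> \<alpha> \<beta> * \<epsilon> \<alpha> \<beta> = 1"
  using eps_sign by fastforce

lemma eps_czero_left: "\<gamma> \<in> C \<Longrightarrow> \<epsilon> czero \<gamma> = 1"
  using eps_cadd_left[OF czero_in_code czero_in_code] eps_sign[OF czero_in_code]
  by (force simp: cadd_czero_left)

lemma eps_czero_right: "\<gamma> \<in> C \<Longrightarrow> \<epsilon> \<gamma> czero = 1"
  using eps_cadd_right[OF _ czero_in_code czero_in_code] eps_sign[OF _ czero_in_code]
  by (force simp: cadd_czero_left)

lemma eps_exchange:
  assumes "\<alpha>\<^sub>1 \<in> C" "\<alpha>\<^sub>2 \<in> C" "\<alpha>\<^sub>3 \<in> C"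
  shows "\<epsilon> \<alpha>\<^sub>2 (cadd \<alpha>\<^sub>1 \<alpha>\<^sub>3) * \<epsilon> \<alpha>\<^sub>1 \<alpha>\<^sub>3 =
         \<epsilon> \<alpha>\<^sub>1 \<alpha>\<^sub>2 * \<epsilon> \<alpha>\<^sub>2 \<alpha>\<^sub>1 * (\<epsilon> \<alpha>\<^sub>1 (cadd \<alpha>\<^sub>2 \<alpha>\<^sub>3) * \<epsilon> \<alpha>\<^sub>2 \<alpha>\<^sub>3)"
proof -
  have "\<epsilon> \<alpha>\<^sub>1 \<alpha>\<^sub>2 * \<epsilon> \<alpha>\<^sub>2 \<alpha>\<^sub>1 * (\<epsilon> \<alpha>\<^sub>1 (cadd \<alpha>\<^sub>2 \<alpha>\<^sub>3) * \<epsilon> \<alpha>\<^sub>2 \<alpha>\<^sub>3) =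
      (\<epsilon> \<alpha>\<^sub>1 \<alpha>\<^sub>2 * \<epsilon> \<alpha>\<^sub>1 \<alpha>\<^sub>2) * (\<epsilon> \<alpha>\<^sub>2 \<alpha>\<^sub>1 * \<epsilon> \<alpha>\<^sub>2 \<alpha>\<^sub>3) * \<epsilon> \<alpha>\<^sub>1 \<alpha>\<^sub>3"
    using assms by (simp add: eps_cadd_right algebra_simps)
  also have "\<dots> = \<epsilon> \<alpha>\<^sub>2 (cadd \<alpha>\<^sub>1 \<alpha>\<^sub>3) * \<epsilon> \<alpha>\<^sub>1 \<alpha>\<^sub>3"
    using assms by (simp add: eps_square eps_cadd_right)
  finally show ?thesis ..
qed

lemma tw_mult_unit_left:
  assumes a: "a \<in> tw_space C"
  shows "tw_mult C \<epsilon> (tw_basis czero) a = a"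
proof
  fix \<gamma>
  show "tw_mult C \<epsilon> (tw_basis czero) a \<gamma> = a \<gamma>"
  proof (cases "\<gamma> \<in> C")
    case True
    have "tw_mult C \<epsilon> (tw_basis czero) a \<gamma> =
        (\<Sum>\<alpha>\<in>C. if \<alpha> = czero then of_int (\<epsilon> czero \<gamma>) * a \<gamma> else 0)"
      using True by (auto simp: tw_mult_def tw_basis_def cadd_czero_left intro!: sum.cong)
    also have "\<dots> = a \<gamma>"
      using True by (simp add: sum.delta finite_code czero_in_code eps_czero_left)
    finally show ?thesis .
  qed (use a in \<open>simp add: tw_mult_def tw_space_def\<close>)
qed

lemma tw_mult_unit_right:
  assumes a: "a \<in> tw_space C"
  shows "tw_mult C \<epsilon> a (tw_basis czero) = a"
proof
  fix \<gamma>
  show "tw_mult C \<epsilon> a (tw_basis czero) \<gamma> = a \<gamma>"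
  proof (cases "\<gamma> \<in> C")
    case True
    have "tw_mult C \<epsilon> a (tw_basis czero) \<gamma> =
        (\<Sum>\<alpha>\<in>C. if \<alpha> = \<gamma> then of_int (\<epsilon> \<gamma> czero) * a \<gamma> else 0)"
      using True
      by (auto simp: tw_mult_def tw_basis_def cadd_self cadd_eq_iff cadd_czero_right intro!: sum.cong)
    also have "\<dots> = a \<gamma>"
      using True by (simp add: sum.delta finite_code eps_czero_right)
    finally show ?thesis .
  qed (use a in \<open>simp add: tw_mult_def tw_space_def\<close>)
qed

lemma tw_mult_exchange:
  assumes a1: "a1 \<in> tw_grading C g1" and a2: "a2 \<in> tw_grading C g2" and a3: "a3 \<in> tw_grading C g3"
    and g': "g' \<in> AG g0 g2 g1 g3"
  shows "comp l r (tw_grading C) g0 (tw_mult C \<epsilon> a2 (comp l r (tw_grading C) g' (tw_mult C \<epsilon> a1 a3))) =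
    (\<Sum>g\<in>AG g0 g1 g2 g3. cscale (BG l r g g' g0 g1 g2 g3)
       (comp l r (tw_grading C) g0 (tw_mult C \<epsilon> a1 (comp l r (tw_grading C) g (tw_mult C \<epsilon> a2 a3)))))"
proof (cases "a1 = 0 \<or> a2 = 0 \<or> a3 = 0")
  case False
  obtain \<alpha>\<^sub>1 c\<^sub>1 where \<alpha>\<^sub>1: "\<alpha>\<^sub>1 \<in> C" "g1 = cdeg \<alpha>\<^sub>1" "a1 = tw_monom c\<^sub>1 \<alpha>\<^sub>1"
    using a1 False by (cases rule: tw_grading_cases) auto
  obtain \<alpha>\<^sub>2 c\<^sub>2 where \<alpha>\<^sub>2: "\<alpha>\<^sub>2 \<in> C" "g2 = cdeg \<alpha>\<^sub>2" "a2 = tw_monom c\<^sub>2 \<alpha>\<^sub>2"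
    using a2 False by (cases rule: tw_grading_cases) auto
  obtain \<alpha>\<^sub>3 c\<^sub>3 where \<alpha>\<^sub>3: "\<alpha>\<^sub>3 \<in> C" "g3 = cdeg \<alpha>\<^sub>3" "a3 = tw_monom c\<^sub>3 \<alpha>\<^sub>3"
    using a3 False by (cases rule: tw_grading_cases) auto
  have g0: "g0 = cdeg (cadd \<alpha>\<^sub>1 (cadd \<alpha>\<^sub>2 \<alpha>\<^sub>3))" and g'_eq: "g' = cdeg (cadd \<alpha>\<^sub>1 \<alpha>\<^sub>3)"
    using g' \<alpha>\<^sub>1 \<alpha>\<^sub>2 \<alpha>\<^sub>3 by (simp_all add: AG_cdeg_iff cadd_left_commute)
  have AG_eq: "AG g0 g1 g2 g3 = {cdeg (cadd \<alpha>\<^sub>2 \<alpha>\<^sub>3)}"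
    using g0 \<alpha>\<^sub>1 \<alpha>\<^sub>2 \<alpha>\<^sub>3 by (auto simp: AG_cdeg_iff)
  have BG_eq: "BG l r g g' g0 g1 g2 g3 = of_int (\<epsilon> \<alpha>\<^sub>1 \<alpha>\<^sub>2 * \<epsilon> \<alpha>\<^sub>2 \<alpha>\<^sub>1)" for g
    using \<alpha>\<^sub>1 \<alpha>\<^sub>2 by (simp add: BG_cdeg eps_commute)
  have C: "cadd \<alpha>\<^sub>1 \<alpha>\<^sub>3 \<in> C" "cadd \<alpha>\<^sub>2 \<alpha>\<^sub>3 \<in> C" "cadd \<alpha>\<^sub>1 (cadd \<alpha>\<^sub>2 \<alpha>\<^sub>3) \<in> C"
    using \<alpha>\<^sub>1 \<alpha>\<^sub>2 \<alpha>\<^sub>3 cadd_in_code by auto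
  have assoc: "cadd \<alpha>\<^sub>2 (cadd \<alpha>\<^sub>1 \<alpha>\<^sub>3) = cadd \<alpha>\<^sub>1 (cadd \<alpha>\<^sub>2 \<alpha>\<^sub>3)"
    by (rule cadd_left_commute)
  have "comp l r (tw_grading C) g0 (tw_mult C \<epsilon> a2 (comp l r (tw_grading C) g' (tw_mult C \<epsilon> a1 a3))) =
      tw_monom (of_int (\<epsilon> \<alpha>\<^sub>2 (cadd \<alpha>\<^sub>1 \<alpha>\<^sub>3)) * c\<^sub>2 * (of_int (\<epsilon> \<alpha>\<^sub>1 \<alpha>\<^sub>3) * c\<^sub>1 * c\<^sub>3))
        (cadd \<alpha>\<^sub>1 (cadd \<alpha>\<^sub>2 \<alpha>\<^sub>3))"
    using \<alpha>\<^sub>1 \<alpha>\<^sub>2 \<alpha>\<^sub>3 C g0 g'_eq by (simp add: tw_mult_monom comp_tw_monom assoc)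
  also have "\<dots> = tw_monom (of_int (\<epsilon> \<alpha>\<^sub>1 \<alpha>\<^sub>2 * \<epsilon> \<alpha>\<^sub>2 \<alpha>\<^sub>1) *
      (of_int (\<epsilon> \<alpha>\<^sub>1 (cadd \<alpha>\<^sub>2 \<alpha>\<^sub>3)) * c\<^sub>1 * (of_int (\<epsilon> \<alpha>\<^sub>2 \<alpha>\<^sub>3) * c\<^sub>2 * c\<^sub>3)))
        (cadd \<alpha>\<^sub>1 (cadd \<alpha>\<^sub>2 \<alpha>\<^sub>3))"
  proof -
    have "complex_of_int (\<epsilon> \<alpha>\<^sub>2 (cadd \<alpha>\<^sub>1 \<alpha>\<^sub>3) * \<epsilon> \<alpha>\<^sub>1 \<alpha>\<^sub>3) =
        of_int (\<epsilon> \<alpha>\<^sub>1 \<alpha>\<^sub>2 * \<epsilon> \<alpha>\<^sub>2 \<alpha>\<^sub>1 * (\<epsilon> \<alpha>\<^sub>1 (cadd \<alpha>\<^sub>2 \<alpha>\<^sub>3) * \<epsilon> \<alpha>\<^sub>2 \<alpha>\<^sub>3))"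
      using eps_exchange[OF \<alpha>\<^sub>1(1) \<alpha>\<^sub>2(1) \<alpha>\<^sub>3(1)] by (simp only:)
    then show ?thesis
      by (simp only: of_int_mult mult_ac)
  qed
  also have "\<dots> = (\<Sum>g\<in>AG g0 g1 g2 g3. cscale (BG l r g g' g0 g1 g2 g3)
       (comp l r (tw_grading C) g0 (tw_mult C \<epsilon> a1 (comp l r (tw_grading C) g (tw_mult C \<epsilon> a2 a3)))))"
    unfolding AG_eq BG_eq using \<alpha>\<^sub>1 \<alpha>\<^sub>2 \<alpha>\<^sub>3 C g0 by (simp add: tw_mult_monom comp_tw_monom cscale_tw_monom)
  finally show ?thesis .
qed (elim disjE; simp)

lemma framed_algebra_tw:
  "framed_algebra cscale l r (tw_space C) (tw_grading C) (tw_mult C \<epsilon>) (tw_basis czero)"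
proof -
  have "tw_basis czero \<noteq> 0"
    by (simp add: tw_basis_eq_monom)
  moreover have "\<forall>g\<in>Gr l r. sG l r g \<notin> \<int> \<longrightarrow> tw_grading C g = {0}"
    using tw_grading_non_integral by blast
  moreover have "\<forall>a\<in>tw_space C. tw_mult C \<epsilon> (tw_basis czero) a = a \<and> tw_mult C \<epsilon> a (tw_basis czero) = a"
    using tw_mult_unit_left tw_mult_unit_right by blast
  moreover have "\<forall>g1\<in>Gr l r. \<forall>g2\<in>Gr l r. \<forall>a\<in>tw_grading C g1. \<forall>b\<in>tw_grading C g2. \<forall>g\<in>Gr l r.
      g \<notin> starG g1 g2 \<longrightarrow> comp l r (tw_grading C) g (tw_mult C \<epsilon> a b) = 0"
    using comp_tw_mult_outside_starG by blast
  moreover have "\<forall>g0\<in>Gr l r. \<forall>g1\<in>Gr l r. \<forall>g2\<in>Gr l r. \<forall>g3\<in>Gr l r.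
      \<forall>a1\<in>tw_grading C g1. \<forall>a2\<in>tw_grading C g2. \<forall>a3\<in>tw_grading C g3. \<forall>g'\<in>AG g0 g2 g1 g3.
      comp l r (tw_grading C) g0 (tw_mult C \<epsilon> a2 (comp l r (tw_grading C) g' (tw_mult C \<epsilon> a1 a3))) =
      (\<Sum>g\<in>AG g0 g1 g2 g3. cscale (BG l r g g' g0 g1 g2 g3)
        (comp l r (tw_grading C) g0 (tw_mult C \<epsilon> a1 (comp l r (tw_grading C) g (tw_mult C \<epsilon> a2 a3)))))"
    using tw_mult_exchange by blast
  ultimately show ?thesis
    unfolding framed_algebra_def
    using graded_space_tw bilinear_on_tw_mult tw_grading_grade0 by blast
qed

lemma simple_framed_tw: "simple_framed cscale l r (tw_space C) (tw_grading C) (tw_mult C \<epsilon>)"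
  unfolding simple_framed_def is_ideal_def
proof (intro allI impI)
  fix M
  assume "module.subspace cscale M \<and> M \<subseteq> tw_space C \<and>
    (\<forall>x\<in>M. \<forall>g. comp l r (tw_grading C) g x \<in> M) \<and> (\<forall>a\<in>tw_space C. \<forall>m\<in>M. tw_mult C \<epsilon> a m \<in> M)"
  then have sub: "module.subspace cscale M" and MV: "M \<subseteq> tw_space C"
    and graded: "\<And>x g. x \<in> M \<Longrightarrow> comp l r (tw_grading C) g x \<in> M"
    and ideal: "\<And>a m. a \<in> tw_space C \<Longrightarrow> m \<in> M \<Longrightarrow> tw_mult C \<epsilon> a m \<in> M"
    by blast+
  show "M = {0} \<or> M = tw_space C"
  proof (cases "M \<subseteq> {0}")
    case True
    then show ?thesis
      using cs.subspace_0[OF sub] by blast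
  next
    case False
    then obtain x where x: "x \<in> M" "x \<noteq> 0"
      by blast
    then obtain \<beta> where "x \<beta> \<noteq> 0"
      by (auto simp: fun_eq_iff)
    have xV: "x \<in> tw_space C"
      using MV x by blast
    with \<open>x \<beta> \<noteq> 0\<close> have \<beta>: "\<beta> \<in> C"
      by (auto simp: tw_space_def)
    have "comp l r (tw_grading C) (cdeg \<beta>) x = tw_monom (x \<beta>) \<beta>"
      using xV by (auto simp: comp_tw_space tw_component_def tw_monom_def intro!: ext)
    with graded[OF x(1)] have x\<beta>: "tw_monom (x \<beta>) \<beta> \<in> M"
      by metis
    have "of_int (\<epsilon> \<beta> \<beta>) \<noteq> (0 :: complex)"
      using eps_sign[OF \<beta> \<beta>] by auto
    then have "tw_mult C \<epsilon> (tw_monom (1 / (of_int (\<epsilon> \<beta> \<beta>) * x \<beta>)) \<beta>) (tw_monom (x \<beta>) \<beta>) =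
        tw_basis czero"
      using \<beta> \<open>x \<beta> \<noteq> 0\<close> by (simp add: tw_mult_monom cadd_self tw_basis_eq_monom)
    with ideal[OF tw_monom_in_tw_space[OF \<beta>] x\<beta>] have unit: "tw_basis czero \<in> M"
      by metis
    have "tw_space C \<subseteq> M"
    proof
      fix a
      assume a: "a \<in> tw_space C"
      with ideal[OF a unit] show "a \<in> M"
        by (simp add: tw_mult_unit_right)
    qed
    with MV show ?thesis
      by blast
  qed
qed

end

theorem mainTheorem10:
  fixes l r :: nat and C :: "codeword set" and \<epsilon> :: "codeword \<Rightarrow> codeword \<Rightarrow> int"
  assumes "even_code l r C"
    and "\<forall>\<alpha>\<in>C. \<forall>\<beta>\<in>C. \<epsilon> \<alpha> \<beta> \<in> {1, -1}"
    and "\<forall>\<alpha>\<in>C. \<forall>\<beta>\<in>C. \<forall>\<gamma>\<in>C. \<epsilon> (cadd \<alpha> \<beta>) \<gamma> = \<epsilon> \<alpha> \<gamma> * \<epsilon> \<beta> \<gamma>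
                          \<and> \<epsilon> \<alpha> (cadd \<beta> \<gamma>) = \<epsilon> \<alpha> \<beta> * \<epsilon> \<alpha> \<gamma>"
    and "\<forall>\<alpha>\<in>C. \<epsilon> \<alpha> \<alpha> = (-1) ^ nat \<bar>wt l r \<alpha> div 2\<bar>"
    and "\<forall>\<alpha>\<in>C. \<forall>\<beta>\<in>C. \<epsilon> \<alpha> \<beta> * \<epsilon> \<beta> \<alpha> = (-1) ^ nat \<bar>wt l r (cmul \<alpha> \<beta>)\<bar>"
  shows "framed_algebra cscale l r (tw_space C) (tw_grading C) (tw_mult C \<epsilon>) (tw_basis czero)
       \<and> simple_framed cscale l r (tw_space C) (tw_grading C) (tw_mult C \<epsilon>)
       \<and> struct_code_D l r (tw_grading C) = {czero}
       \<and> struct_code_C l r (tw_grading C) = C"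
proof -
  interpret twisted_group_algebra l r C \<epsilon>
    using assms(1,2,3,5) by unfold_locales auto
  show ?thesis
    using framed_algebra_tw simple_framed_tw struct_code_D_tw struct_code_C_tw by blast
qed

end
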